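(* Consider mechanisms that use only quantile information about the seller's distribution: such a mechanism is a probability distribution $G$ on $[0,1]$ (fixed independently of $F_S,F_B$); it draws $u\sim G$ and posts the price $p=F_S^{-1}(u)$. For every such $G$, \[\inf_{F_S,F_B\in\Delta_{L^1}(\mathbb{R}_+)}\frac{\mathsf{W}(G;F_S,F_B)}{\mathsf{OPT\text{-}W}(F_S,F_B)}\ \le\ 1-\frac1e .\] That is, no (possibly randomized) mechanism using only quantile knowledge of the seller's distribution guarantees more than a $(1-1/e)$ fraction of the optimal welfare.
   Context: Asymmetric bilateral trade: $S\sim F_S$, $B\sim F_B$ independent, distributions on $[0,\infty)$ with finite mean. Posting price $p$, trade iff $B>p\ge S$; $\mathsf{W}(p;F_S,F_B)=\mathbb{E}[S+(B-S)\mathbf 1_{B>p\ge S}]$ and $\mathsf{OPT\text{-}W}(F_S,F_B)=\mathbb{E}[\max\{B,S\}]$. $F_S^{-1}(u)=\inf\{x:F_S(x)\ge u\}$ is the quantile function, and $\mathsf{W}(G;F_S,F_B)=\mathbb{E}_{u\sim G}[\mathsf{W}(F_S^{-1}(u);F_S,F_B)]$. *)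

theory Defs
  imports "HOL-Probability.Probability"
begin

definition valid_dist :: "real measure \<Rightarrow> bool" where
  "valid_dist F \<longleftrightarrow> prob_space F \<and> sets F = sets borel \<and>
     (AE x in F. 0 \<le> x) \<and> integrable F (\<lambda>x. x)"

text \<open>Quantile function F^{-1}(u) = inf {x. F(x) \<ge> u}, taken in the extended reals
  (so inf of the whole line is -\<infinity> and inf of the empty set is +\<infinity>).\<close>
definition quantile :: "real measure \<Rightarrow> real \<Rightarrow> ereal" where
  "quantile F u = Inf {ereal x | x. u \<le> cdf F x}"

definition welfare_price :: "real measure \<Rightarrow> real measure \<Rightarrow> ereal \<Rightarrow> real" where
  "welfare_price FS FB p =
     (\<integral>sb. fst sb + (snd sb - fst sb) *
            (if p < ereal (snd sb) \<and> ereal (fst sb) \<le> p then 1 else 0) \<partial>(FS \<Otimes>\<^sub>M FB))"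

definition welfare_mech :: "real measure \<Rightarrow> real measure \<Rightarrow> real measure \<Rightarrow> real" where
  "welfare_mech G FS FB = (\<integral>u. welfare_price FS FB (quantile FS u) \<partial>G)"

definition opt_welfare :: "real measure \<Rightarrow> real measure \<Rightarrow> real" where
  "opt_welfare FS FB = (\<integral>sb. max (snd sb) (fst sb) \<partial>(FS \<Otimes>\<^sub>M FB))"

end

theory Submission imports Defs begin

text \<open>The hard instances have a buyer of value 1 and a seller who, with probability 1 - a,
  has value 1 and otherwise is uniform on [0, d] for a small d, so the optimum is 1.  Posting the
  price of seller quantile u \<le> a gains only welfare u over the no-trade welfare E S \<le> 1 - a + d,
  and a quantile above a gives a price of at least 1, so no trade.  If the threshold a is drawn
  with an atom 1/e at 1 and density 1/(e a^2) on [1/e, 1), every quantile gains in expectation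
  at most u P(a \<ge> u) \<le> 1/e, while E a = 2/e; hence for some threshold the mechanism earns at
  most 1 - 2/e + 1/e + d.  The proof averages over a discretisation of this distribution.\<close>

lemma pair_measure_return_eq_distr:
  fixes M :: "real measure"
  assumes "prob_space M" "sets M = sets borel"
  shows "M \<Otimes>\<^sub>M return borel c = distr M (borel \<Otimes>\<^sub>M borel) (\<lambda>s. (s, c))"
proof (rule pair_measure_eqI)
  show "sigma_finite_measure M" "sigma_finite_measure (return borel c)"
    using assms(1) by (simp_all add: prob_space_imp_sigma_finite prob_space_return)
  have "sets (M \<Otimes>\<^sub>M return borel c) = sets (borel \<Otimes>\<^sub>M borel)"
    by (rule sets_pair_measure_cong[OF assms(2)]) simp
  then show "sets (M \<Otimes>\<^sub>M return borel c) = sets (distr M (borel \<Otimes>\<^sub>M borel) (\<lambda>s. (s, c)))"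
    by simp
  fix A B assume A: "A \<in> sets M" and B: "B \<in> sets (return borel c)"
  have space: "space M = UNIV" using assms(2) sets_eq_imp_space_eq by fastforce
  have meas: "(\<lambda>s. (s, c)) \<in> measurable M (borel \<Otimes>\<^sub>M borel)"
    by (simp add: measurable_cong_sets[OF assms(2) refl])
  have AB: "A \<times> B \<in> sets (borel \<Otimes>\<^sub>M borel)" using A B assms(2) by simp
  have "(\<lambda>s. (s, c)) -` (A \<times> B) \<inter> space M = (if c \<in> B then A else {})"
    using space by auto
  then show "emeasure M A * emeasure (return borel c) B
      = emeasure (distr M (borel \<Otimes>\<^sub>M borel) (\<lambda>s. (s, c))) (A \<times> B)"
    using B by (simp add: emeasure_distr[OF meas AB] split: split_indicator)
qed

lemma welfare_price_nonneg:
  assumes "valid_dist FS" "valid_dist FB"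
  shows "0 \<le> welfare_price FS FB p"
proof -
  have FS: "prob_space FS" "sets FS = sets borel" "AE x in FS. 0 \<le> x"
    and FB: "prob_space FB" "sets FB = sets borel" "AE x in FB. 0 \<le> x"
    using assms unfolding valid_dist_def by auto
  interpret pair_sigma_finite FS FB
    unfolding pair_sigma_finite_def using FS FB by (simp add: prob_space_imp_sigma_finite)
  have sets: "sets (FS \<Otimes>\<^sub>M FB) = sets (borel \<Otimes>\<^sub>M borel)"
    by (rule sets_pair_measure_cong[OF FS(2) FB(2)])
  have "Measurable.pred (borel \<Otimes>\<^sub>M borel) (\<lambda>x::real \<times> real. 0 \<le> fst x \<and> 0 \<le> snd x)"
    by measurable
  then have "Measurable.pred (FS \<Otimes>\<^sub>M FB) (\<lambda>x::real \<times> real. 0 \<le> fst x \<and> 0 \<le> snd x)"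
    by (simp add: measurable_cong_sets[OF sets refl])
  then have "{x \<in> space (FS \<Otimes>\<^sub>M FB). 0 \<le> fst x \<and> 0 \<le> snd x} \<in> sets (FS \<Otimes>\<^sub>M FB)"
    by (simp add: pred_def)
  then have "AE x in FS \<Otimes>\<^sub>M FB. 0 \<le> fst x \<and> 0 \<le> snd x"
    by (rule AE_pair_measure) (use FS(3) FB(3) in \<open>auto elim!: eventually_mono\<close>)
  then show ?thesis
    unfolding welfare_price_def by (rule integral_nonneg_AE[OF eventually_mono]) auto
qed

lemma welfare_mech_nonneg:
  assumes "valid_dist FS" "valid_dist FB"
  shows "0 \<le> welfare_mech G FS FB"
  unfolding welfare_mech_def by (rule integral_nonneg_AE) (use welfare_price_nonneg[OF assms] in auto)

subsection \<open>A buyer of value 1\<close>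

lemma
  assumes "valid_dist FS"
  shows welfare_price_unit_buyer: "welfare_price FS (return borel 1) p =
      (\<integral>s. s + (1 - s) * (if p < 1 \<and> ereal s \<le> p then 1 else 0) \<partial>FS)"
    and opt_welfare_unit_buyer: "opt_welfare FS (return borel 1) = (\<integral>s. max 1 s \<partial>FS)"
proof -
  have FS: "prob_space FS" "sets FS = sets borel" using assms unfolding valid_dist_def by auto
  have [measurable]: "(\<lambda>s. (s, 1::real)) \<in> measurable FS (borel \<Otimes>\<^sub>M borel)"
    by (simp add: measurable_cong_sets[OF FS(2) refl])
  show "welfare_price FS (return borel 1) p =
      (\<integral>s. s + (1 - s) * (if p < 1 \<and> ereal s \<le> p then 1 else 0) \<partial>FS)"
    unfolding welfare_price_def pair_measure_return_eq_distr[OF FS]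
    by (subst integral_distr) (auto simp: one_ereal_def)
  show "opt_welfare FS (return borel 1) = (\<integral>s. max 1 s \<partial>FS)"
    unfolding opt_welfare_def pair_measure_return_eq_distr[OF FS] by (subst integral_distr) auto
qed

lemma valid_unit_buyer: "valid_dist (return borel (1::real))"
  unfolding valid_dist_def
proof (intro conjI)
  interpret prob_space "return borel (1::real)" by (rule prob_space_return) simp
  show "prob_space (return borel (1::real))" by unfold_locales
  show "integrable (return borel (1::real)) (\<lambda>x. x)"
    by (rule integrable_const_bound[where B=1]) (auto simp: AE_return)
qed (simp_all add: AE_return)

lemma welfare_price_unit_buyer_le_cdf:
  assumes "valid_dist FS" "p \<le> ereal x"
  shows "welfare_price FS (return borel 1) p \<le> (\<integral>s. s \<partial>FS) + cdf FS x"
proof -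
  have FS: "prob_space FS" "sets FS = sets borel" "AE s in FS. 0 \<le> s" "integrable FS (\<lambda>s. s)"
    using assms(1) unfolding valid_dist_def by auto
  interpret prob_space FS by fact
  have ind: "integrable FS (indicator {..x} :: real \<Rightarrow> real)"
    using FS(2) by (intro integrable_real_indicator) (auto simp: less_top[symmetric])
  have "welfare_price FS (return borel 1) p \<le> (\<integral>s. s + indicator {..x} s \<partial>FS)"
    unfolding welfare_price_unit_buyer[OF assms(1)]
  proof (rule integral_mono_AE')
    show "integrable FS (\<lambda>s. s + indicator {..x} s)" using FS(4) ind by simp
    have below: "ereal s \<le> p \<Longrightarrow> s \<le> x" for s
      using assms(2) by (metis ereal_less_eq(3) order_trans)
    show "AE s in FS. s + (1 - s) * (if p < 1 \<and> ereal s \<le> p then 1 else 0)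
        \<le> s + indicator {..x} s"
      using FS(3) by eventually_elim (auto simp: indicator_def dest: below)
    show "AE s in FS. 0 \<le> s + indicator {..x} s"
      using FS(3) by eventually_elim (auto simp: indicator_def)
  qed
  also have "\<dots> = (\<integral>s. s \<partial>FS) + cdf FS x"
    using FS(4) ind FS(2) by (simp add: cdf_def)
  finally show ?thesis .
qed

lemma welfare_price_unit_buyer_ge_one:
  assumes "valid_dist FS" "1 \<le> p"
  shows "welfare_price FS (return borel 1) p = (\<integral>s. s \<partial>FS)"
proof -
  have "\<not> p < 1" using assms(2) by (simp add: not_less)
  then show ?thesis by (simp add: welfare_price_unit_buyer[OF assms(1)])
qed

subsection \<open>The hard seller\<close>

definition unit_uniform :: "real measure" where
  "unit_uniform = uniform_measure lborel {0..1}"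

lemma prob_space_unit_uniform: "prob_space unit_uniform"
  unfolding unit_uniform_def by (rule prob_space_uniform_measure) auto

lemma sets_unit_uniform [simp, measurable_cong]: "sets unit_uniform = sets borel"
  and space_unit_uniform [simp]: "space unit_uniform = UNIV"
  unfolding unit_uniform_def by simp_all

lemma measure_unit_uniform:
  "A \<in> sets borel \<Longrightarrow> measure unit_uniform A = measure lborel ({0..1} \<inter> A)"
  unfolding unit_uniform_def by (subst measure_uniform_measure) simp_all

lemma AE_unit_uniform: "AE v in unit_uniform. 0 \<le> v \<and> v \<le> 1"
  unfolding unit_uniform_def by (rule AE_uniform_measureI) simp_all

text \<open>The hard seller's value as a function of its quantile v: the quantiles [0, a] are
  spread uniformly over the values [0, d], the remaining mass 1 - a sits at 1.\<close>
definition hard_seller_value :: "real \<Rightarrow> real \<Rightarrow> real \<Rightarrow> real" where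
  "hard_seller_value a d v = (if v \<le> a then d * v / a else 1)"

definition hard_seller :: "real \<Rightarrow> real \<Rightarrow> real measure" where
  "hard_seller a d = distr unit_uniform borel (hard_seller_value a d)"

lemma hard_seller_value_measurable [measurable]: "hard_seller_value a d \<in> borel_measurable borel"
  unfolding hard_seller_value_def by measurable

lemma sets_hard_seller [simp, measurable_cong]: "sets (hard_seller a d) = sets borel"
  unfolding hard_seller_def by simp

lemma integral_hard_seller:
  fixes f :: "real \<Rightarrow> real"
  assumes "f \<in> borel_measurable borel"
  shows "(\<integral>s. f s \<partial>hard_seller a d) = (\<integral>v. f (hard_seller_value a d v) \<partial>unit_uniform)"
  unfolding hard_seller_def using assms by (intro integral_distr) simp_all

lemma cdf_hard_seller:
  "cdf (hard_seller a d) x = measure lborel ({0..1} \<inter> {v. hard_seller_value a d v \<le> x})"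
proof -
  have "cdf (hard_seller a d) x = measure unit_uniform (hard_seller_value a d -` {..x})"
    unfolding cdf_def hard_seller_def by (subst measure_distr) auto
  then show ?thesis by (simp add: measure_unit_uniform vimage_def)
qed

definition quantile_gain :: "real \<Rightarrow> real \<Rightarrow> real" where
  "quantile_gain a u = (if 0 \<le> u \<and> u \<le> a then u else 0)"

lemma quantile_gain_measurable [measurable]: "quantile_gain a \<in> borel_measurable borel"
  unfolding quantile_gain_def by measurable

lemma integrable_quantile_gain:
  assumes "prob_space G" "sets G = sets borel"
  shows "integrable G (quantile_gain a)"
proof -
  interpret prob_space G by fact
  show ?thesis
  proof (rule integrable_const_bound[where B="\<bar>a\<bar>"])
    show "AE x in G. norm (quantile_gain a x) \<le> \<bar>a\<bar>" by (simp add: quantile_gain_def)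
    show "quantile_gain a \<in> borel_measurable G" by (simp add: measurable_cong_sets[OF assms(2) refl])
  qed
qed

context
  fixes a d :: real
  assumes a: "0 < a" "a \<le> 1" and d: "0 < d" "d < 1"
begin

lemma hard_seller_value_bounds:
  "0 \<le> v \<Longrightarrow> 0 \<le> hard_seller_value a d v"
  "0 \<le> v \<Longrightarrow> hard_seller_value a d v \<le> d + indicator {a<..} v"
  "hard_seller_value a d v \<le> 1"
proof -
  have "d * v \<le> a" if "v \<le> a"
  proof (cases "0 \<le> v")
    case True
    then show ?thesis using mult_left_le_one_le[of v d] d that by linarith
  qed (use a d mult_pos_neg[of d v] in auto)
  then show "0 \<le> v \<Longrightarrow> 0 \<le> hard_seller_value a d v"
    "0 \<le> v \<Longrightarrow> hard_seller_value a d v \<le> d + indicator {a<..} v"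
    "hard_seller_value a d v \<le> 1"
    using a d by (auto simp: hard_seller_value_def divide_le_eq mult_left_mono split: split_indicator)
qed

lemma valid_hard_seller: "valid_dist (hard_seller a d)"
  unfolding valid_dist_def
proof (intro conjI)
  show "prob_space (hard_seller a d)"
    unfolding hard_seller_def by (rule prob_space.prob_space_distr[OF prob_space_unit_uniform]) simp
  show "AE x in hard_seller a d. 0 \<le> x"
    unfolding hard_seller_def
    by (subst AE_distr_iff) (use AE_unit_uniform hard_seller_value_bounds(1) in \<open>auto elim: eventually_mono\<close>)
  interpret prob_space unit_uniform by (rule prob_space_unit_uniform)
  have "integrable unit_uniform (hard_seller_value a d)"
    by (rule integrable_const_bound[where B=1])
      (use AE_unit_uniform hard_seller_value_bounds in \<open>auto elim!: eventually_mono\<close>)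
  then show "integrable (hard_seller a d) (\<lambda>x. x)"
    unfolding hard_seller_def by (subst integrable_distr_eq) auto
qed simp

lemma opt_welfare_hard_seller: "opt_welfare (hard_seller a d) (return borel 1) = 1"
proof -
  have "max 1 (hard_seller_value a d v) = 1" for v
    using hard_seller_value_bounds(3) by (simp add: max_absorb1)
  then show ?thesis
    using prob_space.prob_space[OF prob_space_unit_uniform]
    by (simp add: opt_welfare_unit_buyer[OF valid_hard_seller] integral_hard_seller)
qed

lemma mean_hard_seller_le: "(\<integral>s. s \<partial>hard_seller a d) \<le> 1 - a + d"
proof -
  interpret prob_space unit_uniform by (rule prob_space_unit_uniform)
  have ind: "integrable unit_uniform (indicator {a<..} :: real \<Rightarrow> real)"
    by (intro integrable_real_indicator) (auto simp: less_top[symmetric])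
  have "(\<integral>s. s \<partial>hard_seller a d) \<le> (\<integral>v. d + indicator {a<..} v \<partial>unit_uniform)"
    unfolding integral_hard_seller[of "\<lambda>s. s", OF measurable_ident_sets[OF refl]]
  proof (rule integral_mono_AE')
    show "integrable unit_uniform (\<lambda>v. d + indicator {a<..} v)" using ind by simp
    show "AE v in unit_uniform. hard_seller_value a d v \<le> d + indicator {a<..} v"
      using AE_unit_uniform hard_seller_value_bounds(2) by (auto elim: eventually_mono)
    show "AE v in unit_uniform. 0 \<le> d + (indicator {a<..} v :: real)"
      using d by auto
  qed
  also have "\<dots> = d + measure unit_uniform {a<..}"
    using ind prob_space by simp
  also have "measure unit_uniform {a<..} = 1 - a"
  proof -
    have "{0..1} \<inter> {a<..} = {a<..1}" using a by auto
    then show ?thesis using a by (simp add: measure_unit_uniform)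
  qed
  finally show ?thesis by simp
qed

lemma cdf_hard_seller_linear: "0 \<le> u \<Longrightarrow> u \<le> a \<Longrightarrow> cdf (hard_seller a d) (d * u / a) = u"
proof -
  assume u: "0 \<le> u" "u \<le> a"
  have "{0..1} \<inter> {v. hard_seller_value a d v \<le> d * u / a} = {0..u}"
  proof (intro equalityI subsetI)
    fix v assume v: "v \<in> {0..1} \<inter> {v. hard_seller_value a d v \<le> d * u / a}"
    have "d * u / a \<le> d * 1" using a d u by (simp add: divide_le_eq mult_left_mono)
    then have "v \<le> a" using v d by (auto simp: hard_seller_value_def split: if_splits)
    then have "d * v / a \<le> d * u / a" using v by (simp add: hard_seller_value_def)
    then show "v \<in> {0..u}" using v a d by (simp add: divide_le_eq)
  next
    fix v assume "v \<in> {0..u}"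
    then show "v \<in> {0..1} \<inter> {v. hard_seller_value a d v \<le> d * u / a}"
      using a d u by (auto simp: hard_seller_value_def divide_right_mono mult_left_mono)
  qed
  then show ?thesis using a u by (simp add: cdf_hard_seller)
qed

lemma cdf_hard_seller_lt_one: "x < 1 \<Longrightarrow> cdf (hard_seller a d) x \<le> a"
proof -
  assume "x < 1"
  then have "{0..1} \<inter> {v. hard_seller_value a d v \<le> x} \<subseteq> {0..a}"
    by (auto simp: hard_seller_value_def split: if_splits)
  then have "measure lborel ({0..1} \<inter> {v. hard_seller_value a d v \<le> x}) \<le> measure lborel {0..a}"
    by (intro measure_mono_fmeasurable) (auto intro: fmeasurable_compact)
  then show ?thesis using a by (simp add: cdf_hard_seller)
qed

lemma welfare_price_hard_seller_quantile_le:
  assumes "0 \<le> u"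
  shows "welfare_price (hard_seller a d) (return borel 1) (quantile (hard_seller a d) u)
    \<le> 1 - a + d + quantile_gain a u"
proof (cases "u \<le> a")
  case True
  have "quantile (hard_seller a d) u \<le> ereal (d * u / a)"
    unfolding quantile_def by (rule Inf_lower) (use cdf_hard_seller_linear assms True in auto)
  then show ?thesis
    using welfare_price_unit_buyer_le_cdf[OF valid_hard_seller] mean_hard_seller_le
      cdf_hard_seller_linear[OF assms True] assms True
    by (fastforce simp: quantile_gain_def)
next
  case False
  have "1 \<le> quantile (hard_seller a d) u"
    unfolding quantile_def
  proof (rule Inf_greatest)
    fix y assume "y \<in> {ereal x |x. u \<le> cdf (hard_seller a d) x}"
    then obtain x where "y = ereal x" "u \<le> cdf (hard_seller a d) x" by blast
    with cdf_hard_seller_lt_one[of x] False show "1 \<le> y" by (force simp: one_ereal_def)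
  qed
  then show ?thesis
    using welfare_price_unit_buyer_ge_one[OF valid_hard_seller] mean_hard_seller_le False
    by (simp add: quantile_gain_def)
qed

lemma welfare_mech_hard_seller_le:
  assumes G: "prob_space G" "sets G = sets borel" "measure G {0..1} = 1"
  shows "welfare_mech G (hard_seller a d) (return borel 1) \<le> 1 - a + d + (\<integral>u. quantile_gain a u \<partial>G)"
proof -
  interpret prob_space G by fact
  have gain: "integrable G (quantile_gain a)" by (rule integrable_quantile_gain[OF G(1,2)])
  have "welfare_mech G (hard_seller a d) (return borel 1) \<le> (\<integral>u. (1 - a + d) + quantile_gain a u \<partial>G)"
    unfolding welfare_mech_def
  proof (rule integral_mono_AE')
    show "integrable G (\<lambda>u. 1 - a + d + quantile_gain a u)" using gain by simp
    have "AE u in G. u \<in> {0..1}" by (rule AE_prob_1) (use G(3) in simp)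
    then show "AE u in G. welfare_price (hard_seller a d) (return borel 1) (quantile (hard_seller a d) u)
        \<le> 1 - a + d + quantile_gain a u"
      by eventually_elim (simp add: welfare_price_hard_seller_quantile_le)
    show "AE u in G. 0 \<le> 1 - a + d + quantile_gain a u"
      using a d by (simp add: quantile_gain_def)
  qed
  also have "\<dots> = 1 - a + d + (\<integral>u. quantile_gain a u \<partial>G)"
    using gain by (simp add: prob_space)
  finally show ?thesis .
qed

lemma Inf_welfare_ratio_le_hard_seller:
  assumes G: "prob_space G" "sets G = sets borel" "measure G {0..1} = 1"
  shows "Inf {welfare_mech G FS FB / opt_welfare FS FB | FS FB.
                valid_dist FS \<and> valid_dist FB \<and> opt_welfare FS FB > 0}
    \<le> 1 - a + d + (\<integral>u. quantile_gain a u \<partial>G)"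
proof -
  have bdd: "bdd_below {welfare_mech G FS FB / opt_welfare FS FB | FS FB.
                valid_dist FS \<and> valid_dist FB \<and> opt_welfare FS FB > 0}"
    by (rule bdd_belowI[where m=0]) (auto intro!: divide_nonneg_pos welfare_mech_nonneg)
  have "welfare_mech G (hard_seller a d) (return borel 1) / opt_welfare (hard_seller a d) (return borel 1)
      \<in> {welfare_mech G FS FB / opt_welfare FS FB | FS FB.
                valid_dist FS \<and> valid_dist FB \<and> opt_welfare FS FB > 0}"
    using valid_hard_seller valid_unit_buyer opt_welfare_hard_seller by fastforce
  from cInf_lower[OF this bdd] show ?thesis
    using welfare_mech_hard_seller_le[OF G] opt_welfare_hard_seller by simp
qed

end

subsection \<open>The threshold distribution\<close>

lemma convex_combination_ge:
  fixes w f :: "'a \<Rightarrow> real"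
  assumes "finite A" "\<And>k. k \<in> A \<Longrightarrow> 0 \<le> w k" "sum w A = 1" "\<And>k. k \<in> A \<Longrightarrow> c \<le> f k"
  shows "c \<le> (\<Sum>k\<in>A. w k * f k)"
proof -
  have "c = (\<Sum>k\<in>A. w k * c)" using assms(3) by (simp add: sum_distrib_right[symmetric])
  also have "\<dots> \<le> (\<Sum>k\<in>A. w k * f k)" using assms(2,4) by (intro sum_mono mult_left_mono)
  finally show ?thesis .
qed

text \<open>The threshold distribution of the introduction with the mass of each interval
  [e^(-k/n), e^(-(k-1)/n)) moved to its left end point.\<close>
definition mix_threshold :: "nat \<Rightarrow> nat \<Rightarrow> real" where
  "mix_threshold n k = exp (- (real k / real n))"

definition mix_weight :: "nat \<Rightarrow> nat \<Rightarrow> real" where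
  "mix_weight n k = (if k = 0 then exp (-1)
     else exp (-1) * (exp (real k / real n) - exp ((real k - 1) / real n)))"

lemma mix_weight_nonneg: "0 \<le> mix_weight n k"
  by (auto simp: mix_weight_def divide_right_mono)

lemma sum_mix_weight: "(\<Sum>k\<le>N. mix_weight n k) = exp (-1) * exp (real N / real n)"
  by (induction N) (simp_all add: mix_weight_def algebra_simps)

lemma sum_mix_weight_threshold:
  "(\<Sum>k\<le>N. mix_weight n k * mix_threshold n k) = exp (-1) * (1 + real N * (1 - exp (- 1 / real n)))"
proof (induction N)
  case (Suc N)
  have "exp (real N / real n) * exp (- ((1 + real N) / real n)) = exp (- 1 / real n)"
    unfolding mult_exp_exp by (simp add: add_divide_distrib)
  then have "mix_weight n (Suc N) * mix_threshold n (Suc N) = exp (-1) * (1 - exp (- 1 / real n))"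
    by (simp add: mix_weight_def mix_threshold_def algebra_simps mult_exp_exp)
  with Suc show ?case by (simp add: algebra_simps)
qed (simp add: mix_weight_def mix_threshold_def)

lemma sum_mix_weight_gain_partial_le:
  assumes "n > 0" "u > 0"
  shows "(\<Sum>k\<le>N. mix_weight n k * quantile_gain (mix_threshold n k) u)
    \<le> exp (-1) * min (u * exp (real N / real n)) 1"
proof (induction N)
  case (Suc N)
  have mono: "u * exp (real N / real n) \<le> u * exp (real (Suc N) / real n)"
    using assms by (simp add: divide_right_mono)
  have "mix_weight n (Suc N) * quantile_gain (mix_threshold n (Suc N)) u
      \<le> exp (-1) * min (u * exp (real (Suc N) / real n)) 1 - exp (-1) * min (u * exp (real N / real n)) 1"
  proof (cases "u \<le> mix_threshold n (Suc N)")
    case True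
    then have "u * exp (real (Suc N) / real n) \<le> 1"
      by (simp add: mix_threshold_def exp_minus field_simps)
    with mono True assms show ?thesis
      by (simp add: mix_weight_def quantile_gain_def min_def algebra_simps)
  next
    case False
    with mono show ?thesis by (simp add: quantile_gain_def)
  qed
  with Suc show ?case by simp
qed (use assms in \<open>auto simp: mix_weight_def mix_threshold_def quantile_gain_def min_def\<close>)

lemma sum_mix_weight_gain_le:
  assumes "n > 0"
  shows "(\<Sum>k\<le>n. mix_weight n k * quantile_gain (mix_threshold n k) u) \<le> exp (-1)"
proof (cases "u > 0")
  case True
  have "exp (-1) * min (u * exp (real n / real n)) 1 \<le> exp (-1)" by simp
  then show ?thesis using sum_mix_weight_gain_partial_le[OF assms True, of n] by linarith
next
  case False
  then have "quantile_gain (mix_threshold n k) u = 0" for k by (auto simp: quantile_gain_def)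
  then show ?thesis by simp
qed

lemma inverse_Suc_le_one_minus_exp: "n > 0 \<Longrightarrow> 1 / (real n + 1) \<le> 1 - exp (- 1 / real n)"
proof -
  assume n: "n > 0"
  have "exp (- 1 / real n) \<le> 1 / (1 + 1 / real n)"
    using exp_ge_add_one_self[of "1 / real n"] n by (simp add: exp_minus field_simps)
  also have "\<dots> = 1 - 1 / (real n + 1)"
    using n by (simp add: field_simps)
  finally show ?thesis by simp
qed

lemma mixed_threshold_welfare_le:
  assumes G: "prob_space G" "sets G = sets borel" and n: "n > 0"
  shows "(\<Sum>k\<le>n. mix_weight n k * (1 - mix_threshold n k + (\<integral>u. quantile_gain (mix_threshold n k) u \<partial>G)))
    \<le> 1 - exp (-1) + 1 / (real n + 1)"
proof -
  interpret prob_space G by fact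
  let ?w = "mix_weight n" and ?a = "mix_threshold n"
  have "(\<Sum>k\<le>n. ?w k * (\<integral>u. quantile_gain (?a k) u \<partial>G))
      = (\<integral>u. (\<Sum>k\<le>n. ?w k * quantile_gain (?a k) u) \<partial>G)"
    by (simp add: integrable_quantile_gain[OF G])
  also have "\<dots> \<le> (\<integral>u. exp (-1) \<partial>G)"
    by (intro integral_mono) (simp_all add: integrable_quantile_gain[OF G] sum_mix_weight_gain_le[OF n])
  finally have gain: "(\<Sum>k\<le>n. ?w k * (\<integral>u. quantile_gain (?a k) u \<partial>G)) \<le> exp (-1)"
    by (simp add: prob_space)
  have "(\<Sum>k\<le>n. ?w k * (1 - ?a k + (\<integral>u. quantile_gain (?a k) u \<partial>G)))
      = (\<Sum>k\<le>n. ?w k) - (\<Sum>k\<le>n. ?w k * ?a k)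
        + (\<Sum>k\<le>n. ?w k * (\<integral>u. quantile_gain (?a k) u \<partial>G))"
    by (simp add: algebra_simps sum.distrib sum_subtractf)
  also have "\<dots> = 1 - exp (-1) * (1 + real n * (1 - exp (- 1 / real n)))
        + (\<Sum>k\<le>n. ?w k * (\<integral>u. quantile_gain (?a k) u \<partial>G))"
    using n by (simp add: sum_mix_weight mult_exp_exp sum_mix_weight_threshold)
  also have "\<dots> \<le> 1 - exp (-1) * (real n * (1 - exp (- 1 / real n)))"
    using gain by (simp add: algebra_simps)
  also have "\<dots> \<le> 1 - exp (-1) * (real n * (1 / (real n + 1)))"
    by (intro diff_left_mono mult_left_mono inverse_Suc_le_one_minus_exp n) simp_all
  also have "\<dots> = 1 - exp (-1) + exp (-1) * (1 / (real n + 1))"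
    by (simp add: field_simps)
  also have "\<dots> \<le> 1 - exp (-1) + 1 / (real n + 1)"
    by (intro add_left_mono mult_left_le_one_le) simp_all
  finally show ?thesis .
qed

theorem theorem14:
  fixes G :: "real measure"
  assumes "prob_space G" and "sets G = sets borel" and "measure G {0..1} = 1"
  shows "Inf {welfare_mech G FS FB / opt_welfare FS FB | FS FB.
                valid_dist FS \<and> valid_dist FB \<and> opt_welfare FS FB > 0}
         \<le> 1 - exp (-1)"
proof (rule field_le_epsilon)
  fix e :: real assume e: "0 < e"
  define R where "R = {welfare_mech G FS FB / opt_welfare FS FB | FS FB.
                valid_dist FS \<and> valid_dist FB \<and> opt_welfare FS FB > 0}"
  obtain n :: nat where n_large: "2 / e < real n" using reals_Archimedean2 by blast
  have "0 < real n" using e n_large divide_pos_pos[of 2 e] by linarith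
  then have n: "n > 0" "1 / (real n + 1) \<le> e / 2"
    using e n_large by (auto simp: field_simps)
  define d where "d = min (e / 2) (1 / 2)"
  have d: "0 < d" "d < 1" "d \<le> e / 2" using e by (auto simp: d_def)
  have "Inf R - d \<le> (\<Sum>k\<le>n. mix_weight n k *
      (1 - mix_threshold n k + (\<integral>u. quantile_gain (mix_threshold n k) u \<partial>G)))"
  proof (rule convex_combination_ge)
    show "(\<Sum>k\<le>n. mix_weight n k) = 1" using n by (simp add: sum_mix_weight mult_exp_exp)
    fix k
    have "0 < mix_threshold n k" "mix_threshold n k \<le> 1" by (auto simp: mix_threshold_def)
    from Inf_welfare_ratio_le_hard_seller[OF this d(1,2) assms]
    show "Inf R - d \<le> 1 - mix_threshold n k + (\<integral>u. quantile_gain (mix_threshold n k) u \<partial>G)"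
      unfolding R_def by simp
  qed (simp_all add: mix_weight_nonneg)
  also have "\<dots> \<le> 1 - exp (-1) + 1 / (real n + 1)"
    by (rule mixed_threshold_welfare_le[OF assms(1,2) n(1)])
  finally show "Inf R \<le> 1 - exp (-1) + e" using n d by simp
qed

end
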